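(* Let $\mathcal{T}_4$ be the set of $s\in\mathcal{A}^*$ with $|s|\ne\mathsf{rmin}(s)+1$, $0\ne\mathrm{sebr}(s)<\mathrm{Rmin}(s)_{\mathsf{rpos}(s)+1}$, and whose last entry $s_{|s|}$ is not an $\mathcal{M}$asc. Let $\mathcal{P}_1$ be the set of $s\in\mathcal{A}^*$ with $s_{|s|-1}<s_{|s|}=\mathsf{asc}(s)$ and $\mathcal{P}_1^c=\mathcal{A}^*\setminus\mathcal{P}_1$. For every $n$ there is a bijection $f_4:\mathcal{T}_4\cap\mathcal{A}_n\to\{s\in\mathcal{A}_n\cap\mathcal{P}_1^c:\mathsf{rpos}(s)\ne0\}$ such that for all $s$: $\mathsf{asc}(s)=\mathsf{asc}(f_4(s))$, $\mathsf{rep}(s)=\mathsf{rep}(f_4(s))$, $\mathsf{max}(s)=\mathsf{max}(f_4(s))$, $\mathsf{rmin}(s)=\mathsf{rmin}(f_4(s))-1$, $\mathsf{rpos}(s)=\mathsf{rpos}(f_4(s))-1$, $\mathsf{zero}(s)=\mathsf{zero}(f_4(s))+\chi(\mathsf{rpos}(s)=0)$ and $\mathsf{ealm}(s)=\mathsf{ealm}(f_4(s))-\chi(\mathrm{Prm}(s)_{\mathsf{rpos}(s)}=\mathsf{max}(s)+1)$.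
   Context: For a sequence $s$, $\mathsf{asc}(s)=|\{i:s_i<s_{i+1}\}|$. An ascent sequence is a sequence $s=(s_1,\dots,s_n)$ of non-negative integers with $s_1=0$, $s_i\le\mathsf{asc}(s_1,\dots,s_{i-1})+1$ for $i\ge2$; $\mathcal{A}_n$ is the set of those of length $n$, $|s|$ the length; $\mathcal{A}^*$ is the set of all ascent sequences except those of the form $(0,1,\dots,|s|-1)$. $\mathsf{rep}(s)=|s|-|\{s_i\}|$; $\mathsf{zero}(s)=|\{i:s_i=0\}|$; $\mathsf{max}(s)=|\{i:s_i=i-1\}|$; $\mathsf{ealm}(s)=s_{\mathsf{max}(s)+1}$ if $\mathsf{max}(s)\ne|s|$, else $0$. A right-to-left minimum is an entry $s_i$ with $s_i<s_j$ for all $j>i$; $\mathsf{rmin}(s)$ is their number; they are indexed $0,\dots,\mathsf{rmin}(s)-1$ from left to right, with values $\mathrm{Rmin}(s)_m$ and positions $\mathrm{Prm}(s)_m$. $\mathsf{rpos}(s)$: $0$ if $\mathsf{rmin}(s)=|s|$; otherwise the maximal $m$ such that the value $\mathrm{Rmin}(s)_m$ occurs at least twice after position $\mathrm{Prm}(s)_{m-1}$ (for $m=0$: at least twice in $s$), and $0$ if none. $\mathrm{sebr}(s)$ is the smallest entry strictly between the two rightmost occurrences of $\mathrm{Rmin}(s)_{\mathsf{rpos}(s)}$, and $0$ if they are adjacent; when $\mathsf{rpos}(s)=\mathsf{rmin}(s)-1$ one always regards $\mathrm{sebr}(s)<\mathrm{Rmin}(s)_{\mathsf{rpos}(s)+1}$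 as true. An entry $s_i$ is an $\mathcal{M}$asc if $s_i=\mathsf{asc}(s_1,\dots,s_{i-1})+1$. $\chi(P)=1$ if $P$ holds, else $0$. *)

theory Defs
  imports Main
begin

text \<open>Sequences are lists of naturals; list index i (0-based) corresponds to
  paper position i+1.\<close>

definition asc :: "nat list \<Rightarrow> nat" where
  "asc s = card {i. i + 1 < length s \<and> s ! i < s ! (i + 1)}"

definition ascent_seq :: "nat list \<Rightarrow> bool" where
  "ascent_seq s \<longleftrightarrow> s \<noteq> [] \<and> s ! 0 = 0 \<and>
     (\<forall>i. 1 \<le> i \<and> i < length s \<longrightarrow> s ! i \<le> asc (take i s) + 1)"

definition Aset :: "nat \<Rightarrow> nat list set" where
  "Aset n = {s. ascent_seq s \<and> length s = n}"

definition Astar :: "nat list set" where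
  "Astar = {s. ascent_seq s \<and> s \<noteq> [0..<length s]}"

definition rep :: "nat list \<Rightarrow> nat" where
  "rep s = length s - card (set s)"

definition zero :: "nat list \<Rightarrow> nat" where
  "zero s = card {i. i < length s \<and> s ! i = 0}"

definition maxst :: "nat list \<Rightarrow> nat" where
  "maxst s = card {i. i < length s \<and> s ! i = i}"

definition ealm :: "nat list \<Rightarrow> nat" where
  "ealm s = (if maxst s \<noteq> length s then s ! (maxst s) else 0)"

definition rmin_positions :: "nat list \<Rightarrow> nat list" where
  "rmin_positions s = sorted_list_of_set
     {i. i < length s \<and> (\<forall>j. i < j \<and> j < length s \<longrightarrow> s ! i < s ! j)}"

definition rmin :: "nat list \<Rightarrow> nat" where
  "rmin s = length (rmin_positions s)"

definition Prm :: "nat list \<Rightarrow> nat \<Rightarrow> nat" where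
  "Prm s m = rmin_positions s ! m"

definition Rmin :: "nat list \<Rightarrow> nat \<Rightarrow> nat" where
  "Rmin s m = s ! (Prm s m)"

definition rpos_cond :: "nat list \<Rightarrow> nat \<Rightarrow> bool" where
  "rpos_cond s m \<longleftrightarrow>
     2 \<le> card {j. j < length s \<and> (m = 0 \<or> Prm s (m - 1) < j) \<and> s ! j = Rmin s m}"

definition rpos :: "nat list \<Rightarrow> nat" where
  "rpos s = (if rmin s = length s then 0
             else if \<exists>m < rmin s. rpos_cond s m
                  then (GREATEST m. m < rmin s \<and> rpos_cond s m) else 0)"

text \<open>Smallest entry strictly between the two rightmost occurrences of
  Rmin_{rpos}; 0 if they are adjacent (and, by convention, 0 if there are
  fewer than two occurrences).\<close>
definition sebr :: "nat list \<Rightarrow> nat" where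
  "sebr s = (let v = Rmin s (rpos s);
                 Occ = {j. j < length s \<and> s ! j = v} in
             if card Occ < 2 then 0 else
             (let j2 = Max Occ; j1 = Max (Occ - {j2}) in
              if j1 + 1 = j2 then 0 else Min {s ! k | k. j1 < k \<and> k < j2}))"

text \<open>sebr(s) < Rmin(s)_{rpos(s)+1}, regarded true when rpos(s) = rmin(s) - 1.\<close>
definition sebr_lt :: "nat list \<Rightarrow> bool" where
  "sebr_lt s \<longleftrightarrow> rpos s + 1 = rmin s \<or> sebr s < Rmin s (rpos s + 1)"

definition last_Masc :: "nat list \<Rightarrow> bool" where
  "last_Masc s \<longleftrightarrow> last s = asc (butlast s) + 1"

definition T4 :: "nat list set" where
  "T4 = {s \<in> Astar. length s \<noteq> rmin s + 1 \<and> sebr s \<noteq> 0 \<and> sebr_lt s \<and> \<not> last_Masc s}"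

definition P1 :: "nat list set" where
  "P1 = {s \<in> Astar. s ! (length s - 2) < s ! (length s - 1) \<and> s ! (length s - 1) = asc s}"

definition P1c :: "nat list set" where
  "P1c = Astar - P1"

end

theory Submission
  imports Defs
begin

(*
  Let r = rpos(s), let p = Prm(s)_r be the rightmost occurrence of v = Rmin(s)_r, let q < p be
  the previous occurrence of v, and let m = sebr(s) be attained at q < k < p.  For s in T4 every
  entry strictly between q and p exceeds v and is at least m, and every entry after p exceeds m.
  So raising s_p from v to m changes neither the ascents nor the set of values, while q becomes
  a new right-to-left minimum of index r; m now occurs at k and p after it, so rmin and rpos both
  grow by one.  The number of zeros drops exactly when v = 0, i.e. r = 0, and ealm changes
  exactly when p = max(s), where it goes from s_q = q to m = q + 1.  Conversely, in t of the
  target q = Prm(t)_(rpos(t)-1) and p = Prm(t)_rpos(t) form the same configuration, and lowering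
  t_p to t_q recovers s.
*)

lemma two_le_card_if_distinct: "finite A \<Longrightarrow> a \<in> A \<Longrightarrow> b \<in> A \<Longrightarrow> a \<noteq> b \<Longrightarrow> 2 \<le> card A"
  using card_mono[of A "{a, b}"] by simp

lemma other_if_two_le_card: "2 \<le> card A \<Longrightarrow> \<exists>b\<in>A. b \<noteq> a"
  using card_mono[of "{a}" A] by fastforce

lemma Min_between_attained:
  fixes f :: "nat \<Rightarrow> 'a::linorder"
  assumes "Suc a < b"
  obtains k where "a < k" and "k < b" and "f k = Min {f i |i. a < i \<and> i < b}"
    and "\<And>i. a < i \<Longrightarrow> i < b \<Longrightarrow> f k \<le> f i"
proof -
  have B: "{f i |i. a < i \<and> i < b} = f ` {a<..<b}"
    by auto
  have "Min (f ` {a<..<b}) \<in> f ` {a<..<b}"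
    using assms by (intro Min_in) auto
  then obtain k where "k \<in> {a<..<b}" "f k = Min (f ` {a<..<b})"
    by auto
  moreover have "Min (f ` {a<..<b}) \<le> f i" if "a < i" "i < b" for i
    using that by (intro Min_le) auto
  ultimately show ?thesis
    using that unfolding B by auto
qed

lemma sorted_list_of_set_insert_take_drop:
  fixes A :: "'a::linorder set"
  assumes fin: "finite A" and i: "i \<le> card A"
    and below: "\<And>j. j < i \<Longrightarrow> sorted_list_of_set A ! j < x"
    and above: "\<And>j. i \<le> j \<Longrightarrow> j < card A \<Longrightarrow> x < sorted_list_of_set A ! j"
  shows "sorted_list_of_set (insert x A) =
           take i (sorted_list_of_set A) @ x # drop i (sorted_list_of_set A)"
proof -
  let ?L = "sorted_list_of_set A"
  have lt_x: "a < x" if "a \<in> set (take i ?L)" for a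
    using that below fin by (auto simp: in_set_conv_nth)
  have gt_x: "x < a" if "a \<in> set (drop i ?L)" for a
    using that above fin i by (auto simp: in_set_conv_nth)
  have "x \<notin> set (take i ?L) \<union> set (drop i ?L)"
    using lt_x gt_x by blast
  then have xA: "x \<notin> A"
    using fin by (metis append_take_drop_id set_append set_sorted_list_of_set)
  have "sorted_wrt (<) (take i ?L @ x # drop i ?L)"
    using lt_x gt_x sorted_wrt_take[of "(<)" ?L i] sorted_wrt_drop[of "(<)" ?L i]
    by (auto simp: sorted_wrt_append intro: less_trans)
  moreover have "set (take i ?L @ x # drop i ?L) = insert x A"
    using fin by (metis Un_insert_right append_take_drop_id list.simps(15) set_append
        set_sorted_list_of_set)
  moreover have "length (take i ?L @ x # drop i ?L) = card (insert x A)"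
    using fin i xA by simp
  ultimately show ?thesis
    using sorted_list_of_set_unique[of "insert x A"] fin by blast
qed

section \<open>Right-to-left minima\<close>

definition rmin_set :: "nat list \<Rightarrow> nat set" where
  "rmin_set s = {i. i < length s \<and> (\<forall>j. i < j \<and> j < length s \<longrightarrow> s ! i < s ! j)}"

lemma mem_rmin_set_iff:
  "i \<in> rmin_set s \<longleftrightarrow> i < length s \<and> (\<forall>j. i < j \<and> j < length s \<longrightarrow> s ! i < s ! j)"
  unfolding rmin_set_def by simp

lemma rmin_setD: "i \<in> rmin_set s \<Longrightarrow> i < j \<Longrightarrow> j < length s \<Longrightarrow> s ! i < s ! j"
  unfolding rmin_set_def by blast

lemma rmin_set_subset: "rmin_set s \<subseteq> {..<length s}"
  unfolding rmin_set_def by auto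

lemma finite_rmin_set [simp]: "finite (rmin_set s)"
  using rmin_set_subset finite_subset by blast

lemma rmin_positions_eq: "rmin_positions s = sorted_list_of_set (rmin_set s)"
  unfolding rmin_positions_def rmin_set_def ..

lemma rmin_eq_card: "rmin s = card (rmin_set s)"
  unfolding rmin_def rmin_positions_eq by simp

lemma Prm_eq_nth: "Prm s k = rmin_positions s ! k"
  unfolding Prm_def ..

lemma rmin_set_iff_Prm: "i \<in> rmin_set s \<longleftrightarrow> (\<exists>k < rmin s. Prm s k = i)"
  unfolding Prm_def rmin_def rmin_positions_eq
  by (metis finite_rmin_set in_set_conv_nth set_sorted_list_of_set)

lemma Prm_in_rmin_set: "k < rmin s \<Longrightarrow> Prm s k \<in> rmin_set s"
  using rmin_set_iff_Prm by blast

lemma Prm_less_length: "k < rmin s \<Longrightarrow> Prm s k < length s"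
  using Prm_in_rmin_set rmin_set_subset by blast

lemma Prm_less_Prm_iff:
  assumes "k < rmin s" and "l < rmin s"
  shows "Prm s k < Prm s l \<longleftrightarrow> k < l"
proof -
  have "sorted_wrt (<) (rmin_positions s)" and "length (rmin_positions s) = rmin s"
    by (simp_all add: rmin_positions_eq rmin_def)
  then have "Prm s k < Prm s l" if "k < l" "l < rmin s" for k l
    using that by (metis Prm_def sorted_wrt_nth_less)
  then show ?thesis
    using assms by (metis less_asym' nat_neq_iff)
qed

lemma Prm_mono: "k \<le> l \<Longrightarrow> l < rmin s \<Longrightarrow> Prm s k \<le> Prm s l"
  using Prm_less_Prm_iff[of k s l] by (cases "k = l") auto

lemma Prm_inject: "k < rmin s \<Longrightarrow> l < rmin s \<Longrightarrow> Prm s k = Prm s l \<Longrightarrow> k = l"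
  using Prm_less_Prm_iff by (metis less_irrefl nat_neq_iff)

lemma Rmin_less: "k < l \<Longrightarrow> l < rmin s \<Longrightarrow> Rmin s k < Rmin s l"
  unfolding Rmin_def
  by (meson Prm_in_rmin_set Prm_less_Prm_iff Prm_less_length less_trans rmin_setD)

lemma rmin_less_length: "i < length s \<Longrightarrow> i \<notin> rmin_set s \<Longrightarrow> rmin s < length s"
  unfolding rmin_eq_card using rmin_set_subset
  by (metis card_lessThan finite_lessThan lessThan_iff psubset_card_mono psubsetI)

lemma ex_rmin_set_after: "j < length s \<Longrightarrow> \<exists>i\<in>rmin_set s. j \<le> i \<and> s ! i \<le> s ! j"
proof (induction "length s - j" arbitrary: j rule: less_induct)
  case less
  show ?case
  proof (cases "j \<in> rmin_set s")
    case False
    then obtain j' where j': "j < j'" "j' < length s" "s ! j' \<le> s ! j"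
      using less.prems unfolding rmin_set_def by (auto simp: not_less)
    then obtain i where "i \<in> rmin_set s" "j' \<le> i" "s ! i \<le> s ! j'"
      using less.hyps[of j'] less.prems by (meson diff_less_mono2)
    with j' show ?thesis
      by (meson le_trans less_imp_le)
  qed auto
qed

lemma Rmin_le_nth:
  assumes k: "k < rmin s" and j: "j < length s" and after: "k = 0 \<or> Prm s (k - 1) < j"
  shows "Rmin s k \<le> s ! j"
proof -
  obtain i where i: "i \<in> rmin_set s" "j \<le> i" "s ! i \<le> s ! j"
    using ex_rmin_set_after[OF j] by blast
  then obtain l where l: "l < rmin s" "Prm s l = i"
    using rmin_set_iff_Prm by blast
  have "k \<le> l"
    using after i(2) l k Prm_less_Prm_iff[of "k - 1" s l] by (cases k) auto
  then have "Rmin s k \<le> Rmin s l"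
    using Rmin_less[of k l s] l by (cases "k = l") auto
  then show ?thesis
    using i l unfolding Rmin_def by simp
qed

lemma last_in_rmin_set: "s \<noteq> [] \<Longrightarrow> length s - 1 \<in> rmin_set s"
  unfolding rmin_set_def by auto

lemma Prm_last: "s \<noteq> [] \<Longrightarrow> Prm s (rmin s - 1) = length s - 1"
proof -
  assume "s \<noteq> []"
  then obtain l where l: "l < rmin s" "Prm s l = length s - 1"
    using last_in_rmin_set rmin_set_iff_Prm by blast
  then have "length s - 1 \<le> Prm s (rmin s - 1)"
    using Prm_mono[of l "rmin s - 1" s] by simp
  moreover have "Prm s (rmin s - 1) < length s"
    using Prm_less_length[of "rmin s - 1" s] l by simp
  ultimately show ?thesis by simp
qed

section \<open>The statistics rpos and sebr\<close>

lemma le_rpos: "rmin s \<noteq> length s \<Longrightarrow> m < rmin s \<Longrightarrow> rpos_cond s m \<Longrightarrow> m \<le> rpos s"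
  unfolding rpos_def by (auto intro: Greatest_le_nat[where b = "rmin s"])

lemma rpos_cond_rpos:
  assumes "rmin s \<noteq> length s" and "m < rmin s" and "rpos_cond s m"
  shows "rpos s < rmin s \<and> rpos_cond s (rpos s)"
  using assms GreatestI_nat[of "\<lambda>m. m < rmin s \<and> rpos_cond s m" m "rmin s"]
  unfolding rpos_def by auto

lemma rpos_eqI:
  assumes "rmin s \<noteq> length s" and "r < rmin s" and "rpos_cond s r"
    and "\<And>m. r < m \<Longrightarrow> m < rmin s \<Longrightarrow> \<not> rpos_cond s m"
  shows "rpos s = r"
  using le_rpos[OF assms(1-3)] rpos_cond_rpos[OF assms(1-3)] assms(4)
  by (metis le_neq_implies_less)

lemma rpos_cond_rpos_if_ne_0:
  assumes "rpos s \<noteq> 0"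
  shows "rpos s < rmin s \<and> rpos_cond s (rpos s)"
proof -
  have "rmin s \<noteq> length s" and "\<exists>m < rmin s. rpos_cond s m"
    using assms unfolding rpos_def by (auto split: if_splits)
  then show ?thesis
    using rpos_cond_rpos by blast
qed

lemma rpos_cond_rpos_if_two_le_card:
  assumes "s \<noteq> []" and "2 \<le> card {j. j < length s \<and> s ! j = Rmin s (rpos s)}"
  shows "rpos s < rmin s \<and> rpos_cond s (rpos s)"
proof (cases "rpos s = 0")
  case True
  have "0 < rmin s"
    using last_in_rmin_set[OF assms(1)] rmin_set_iff_Prm by fastforce
  then show ?thesis
    using True assms(2) unfolding rpos_cond_def by simp
qed (use rpos_cond_rpos_if_ne_0 in blast)

lemma rpos_cond_other_occurrence:
  assumes r: "r < rmin s" and "rpos_cond s r"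
  obtains j where "j < Prm s r" and "r = 0 \<or> Prm s (r - 1) < j" and "s ! j = s ! Prm s r"
proof -
  obtain j where "j \<in> {j. j < length s \<and> (r = 0 \<or> Prm s (r - 1) < j) \<and> s ! j = Rmin s r}"
    and "j \<noteq> Prm s r"
    using \<open>rpos_cond s r\<close> unfolding rpos_cond_def by (meson other_if_two_le_card)
  then have j: "j < length s" "r = 0 \<or> Prm s (r - 1) < j" "s ! j = s ! Prm s r" "j \<noteq> Prm s r"
    unfolding Rmin_def by simp_all
  moreover have "j < Prm s r"
    using j rmin_setD[OF Prm_in_rmin_set[OF r], of j] by (metis less_irrefl nat_neq_iff)
  ultimately show ?thesis
    using that by blast
qed

lemma sebr_rightmost_occurrences:
  assumes "s \<noteq> []" and "sebr s \<noteq> 0"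
  obtains q where "rpos s < rmin s" and "q < Prm s (rpos s)" and "s ! q = s ! Prm s (rpos s)"
    and "\<And>i. q < i \<Longrightarrow> i < Prm s (rpos s) \<Longrightarrow> s ! Prm s (rpos s) < s ! i"
    and "Suc q < Prm s (rpos s)" and "sebr s = Min {s ! i |i. q < i \<and> i < Prm s (rpos s)}"
proof -
  define r where "r = rpos s"
  define p where "p = Prm s r"
  define Occ where "Occ = {j. j < length s \<and> s ! j = Rmin s r}"
  have fin: "finite Occ" unfolding Occ_def by simp
  have two: "2 \<le> card Occ"
    using assms(2) unfolding sebr_def Let_def Occ_def r_def by (auto split: if_splits)
  then have r: "r < rmin s" "rpos_cond s r"
    using rpos_cond_rpos_if_two_le_card[OF assms(1)] unfolding Occ_def r_def by auto
  have p_Occ: "p \<in> Occ"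
    unfolding Occ_def p_def Rmin_def using Prm_less_length[OF r(1)] by simp
  have le_p: "j \<le> p" if "j \<in> Occ" for j
    using that rmin_setD[OF Prm_in_rmin_set[OF r(1)], of j]
    unfolding Occ_def p_def Rmin_def by (metis (lifting) mem_Collect_eq not_le less_irrefl)
  have Max_Occ: "Max Occ = p"
    using fin p_Occ le_p by (intro Max_eqI) auto
  define q where "q = Max (Occ - {p})"
  have "Occ - {p} \<noteq> {}"
    using other_if_two_le_card[OF two, of p] by blast
  then have "q \<in> Occ - {p}"
    unfolding q_def using fin by (intro Max_in) auto
  then have q: "q \<in> Occ" "q \<noteq> p"
    by auto
  have le_q: "j \<le> q" if "j \<in> Occ - {p}" for j
    unfolding q_def using fin that by (intro Max_ge) auto
  have q_less: "q < p"
    using le_p[OF q(1)] q(2) by simp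
  obtain j where "j < p" "r = 0 \<or> Prm s (r - 1) < j" "s ! j = s ! p"
    using rpos_cond_other_occurrence[OF r] unfolding p_def by blast
  with le_q[of j] Prm_less_length[OF r(1)] have "r = 0 \<or> Prm s (r - 1) < q"
    unfolding Occ_def p_def Rmin_def by auto
  then have between: "Rmin s r < s ! i" if "q < i" "i < p" for i
    using that Rmin_le_nth[OF r(1), of i] le_q[of i] Prm_less_length[OF r(1)] p_def
    unfolding Occ_def by fastforce
  have "sebr s = (if q + 1 = p then 0 else Min {s ! i |i. q < i \<and> i < p})"
    using two Max_Occ unfolding sebr_def Let_def Occ_def r_def p_def q_def by simp
  with assms(2) q_less have "Suc q < p" "sebr s = Min {s ! i |i. q < i \<and> i < p}"
    by (auto split: if_splits)
  with that r q_less q between show ?thesis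
    unfolding r_def p_def Occ_def Rmin_def by auto
qed

lemma sebr_less_after_rpos:
  assumes "s \<noteq> []" and "sebr_lt s" and "rpos s < rmin s"
    and "Prm s (rpos s) < i" and "i < length s"
  shows "sebr s < s ! i"
proof (cases "rpos s + 1 = rmin s")
  case True
  then have "Prm s (rpos s) = length s - 1"
    using Prm_last[OF assms(1)] by (metis add_diff_cancel_right')
  then show ?thesis
    using assms(4,5) by simp
next
  case False
  then have "sebr s < Rmin s (rpos s + 1)"
    using assms(2) unfolding sebr_lt_def by simp
  also have "\<dots> \<le> s ! i"
    using Rmin_le_nth[of "rpos s + 1" s i] False assms(3-5) by simp
  finally show ?thesis .
qed

section \<open>Ascents\<close>

lemma asc_take_eq: "asc (take j s) = card {i. Suc i < min j (length s) \<and> s ! i < s ! Suc i}"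
  unfolding asc_def by (intro arg_cong[where f = card]) auto

lemma asc_take_Suc:
  "asc (take (Suc j) s) =
     asc (take j s) + (if 0 < j \<and> j < length s \<and> s ! (j - 1) < s ! j then 1 else 0)"
proof -
  let ?A = "\<lambda>j. {i. Suc i < min j (length s) \<and> s ! i < s ! Suc i}"
  have fin: "finite (?A j)"
    by (rule finite_subset[of _ "{..<j}"]) auto
  show ?thesis
  proof (cases "0 < j \<and> j < length s \<and> s ! (j - 1) < s ! j")
    case True
    then have "?A (Suc j) = insert (j - 1) (?A j)" and "j - 1 \<notin> ?A j"
      by (auto simp: less_Suc_eq min_def)
    with fin True show ?thesis
      by (simp add: asc_take_eq)
  next
    case False
    then have "?A (Suc j) = ?A j"
      by (cases j) (auto simp: less_Suc_eq min_def)
    with False show ?thesis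
      by (simp add: asc_take_eq)
  qed
qed

lemma asc_take_le: "asc (take j s) \<le> j - 1"
proof -
  have "asc (take j s) \<le> card {..<j - 1}"
    unfolding asc_take_eq by (intro card_mono) auto
  then show ?thesis by simp
qed

lemma asc_take_mono: "k \<le> l \<Longrightarrow> asc (take k s) \<le> asc (take l s)"
  by (induction l) (auto simp: asc_take_Suc le_Suc_eq intro: le_trans)

lemma asc_take_le_add: "k \<le> l \<Longrightarrow> asc (take l s) \<le> asc (take k s) + (l - k)"
  by (induction l) (auto simp: asc_take_Suc le_Suc_eq)

lemma nth_le_asc_take:
  assumes "ascent_seq s" and "j < length s"
  shows "s ! j \<le> asc (take (Suc j) s)"
  using assms(2)
proof (induction j)
  case 0
  then show ?case using assms(1) unfolding ascent_seq_def by simp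
next
  case (Suc j)
  have "s ! Suc j \<le> asc (take (Suc j) s) + 1"
    using assms(1) Suc.prems unfolding ascent_seq_def by auto
  then show ?case
    using Suc asc_take_Suc[of "Suc j" s] asc_take_mono[of "Suc j" "Suc (Suc j)" s]
    by (cases "s ! j < s ! Suc j") auto
qed

lemma nth_le_index: "ascent_seq s \<Longrightarrow> j < length s \<Longrightarrow> s ! j \<le> j"
  using nth_le_asc_take asc_take_le[of "Suc j" s] by fastforce

lemma asc_butlast:
  assumes "2 \<le> length s"
  shows "asc s = asc (butlast s) + (if s ! (length s - 2) < s ! (length s - 1) then 1 else 0)"
  using assms asc_take_Suc[of "length s - 1" s]
  by (simp add: butlast_conv_take numeral_2_eq_2 Suc_diff_Suc)

lemma nth_eq_index_prefix:
  assumes asc_s: "ascent_seq s" and i: "i < length s" "s ! i = i" and "j \<le> i"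
  shows "s ! j = j"
  using \<open>j \<le> i\<close>
proof (induction j)
  case 0
  then show ?case using asc_s unfolding ascent_seq_def by simp
next
  case (Suc j)
  show ?case
  proof (cases "Suc j = i")
    case False
    then have lt: "Suc j < i" using Suc.prems by simp
    have "1 \<le> i" using lt by simp
    with asc_s i have "i \<le> asc (take i s) + 1"
      unfolding ascent_seq_def by metis
    moreover have "asc (take i s) \<le> asc (take (Suc (Suc j)) s) + (i - Suc (Suc j))"
      using asc_take_le_add lt by simp
    ultimately have "Suc j \<le> asc (take (Suc (Suc j)) s)"
      using lt by linarith
    moreover have "asc (take (Suc j) s) \<le> j"
      using asc_take_le[of "Suc j" s] by simp
    ultimately have "s ! j < s ! Suc j"
      using asc_take_Suc[of "Suc j" s] by (auto split: if_splits)
    then show ?thesis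
      using Suc nth_le_index[OF asc_s, of "Suc j"] lt i by simp
  qed (use i in simp)
qed

lemma nth_eq_index_below_maxst:
  assumes asc_s: "ascent_seq s" and k: "k < maxst s"
  shows "s ! k = k"
proof (rule ccontr)
  assume "s ! k \<noteq> k"
  then have "i < k" if "i < length s" "s ! i = i" for i
    using nth_eq_index_prefix[OF asc_s that, of k] by (meson not_less)
  then have "card {i. i < length s \<and> s ! i = i} \<le> card {..<k}"
    by (intro card_mono) auto
  then have "maxst s \<le> k"
    unfolding maxst_def by simp
  then show False using k by simp
qed

lemma ascent_seq_in_Astar:
  assumes "ascent_seq s" and "i < j" and "j < length s" and "s ! i = s ! j"
  shows "s \<in> Astar"
proof -
  have "s \<noteq> [0..<length s]"
    using assms(2-4) by (metis less_trans less_irrefl nth_upt plus_nat.add_0)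
  then show ?thesis using assms(1) unfolding Astar_def by simp
qed

definition same_ascents :: "nat list \<Rightarrow> nat list \<Rightarrow> bool" where
  "same_ascents s t \<longleftrightarrow> length s = length t \<and>
     (\<forall>i. Suc i < length s \<longrightarrow> (s ! i < s ! Suc i \<longleftrightarrow> t ! i < t ! Suc i))"

lemma asc_take_same_ascents: "same_ascents s t \<Longrightarrow> asc (take j s) = asc (take j t)"
proof (induction j)
  case (Suc j)
  then show ?case
    unfolding asc_take_Suc by (cases j) (auto simp: same_ascents_def)
qed simp

lemma asc_same_ascents: "same_ascents s t \<Longrightarrow> asc s = asc t"
  using asc_take_same_ascents[of s t "length s"] by (simp add: same_ascents_def)

lemma same_ascents_update:
  assumes "0 < p \<Longrightarrow> s ! (p - 1) < s ! p \<longleftrightarrow> s ! (p - 1) < x"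
    and "Suc p < length s \<Longrightarrow> s ! p < s ! Suc p \<longleftrightarrow> x < s ! Suc p"
  shows "same_ascents s (s[p := x])"
  unfolding same_ascents_def
proof (intro conjI allI impI)
  fix i assume i: "Suc i < length s"
  show "s ! i < s ! Suc i \<longleftrightarrow> s[p := x] ! i < s[p := x] ! Suc i"
    using assms i by (cases "i = p"; cases "Suc i = p") auto
qed simp

lemma ascent_seq_update:
  assumes asc_s: "ascent_seq s" and "k < p" and same: "same_ascents s (s[p := s ! k])"
  shows "ascent_seq (s[p := s ! k])"
  unfolding ascent_seq_def
proof (intro conjI allI impI)
  let ?t = "s[p := s ! k]"
  show "?t \<noteq> []" and "?t ! 0 = 0"
    using asc_s \<open>k < p\<close> unfolding ascent_seq_def by auto
  fix i assume i: "1 \<le> i \<and> i < length ?t"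
  have "?t ! i \<le> asc (take i s) + 1"
  proof (cases "i = p")
    case True
    have "s ! k \<le> asc (take (Suc k) s)"
      using nth_le_asc_take[OF asc_s] \<open>k < p\<close> i True by simp
    also have "\<dots> \<le> asc (take i s)"
      using asc_take_mono \<open>k < p\<close> True by simp
    finally show ?thesis using i True by simp
  qed (use asc_s i in \<open>auto simp: ascent_seq_def\<close>)
  then show "?t ! i \<le> asc (take i ?t) + 1"
    using asc_take_same_ascents[OF same] by simp
qed

section \<open>Raising one entry\<close>

(* For r = rpos s this is the configuration described at the top: s ! k = sebr s and t = f4 s. *)
locale raise_entry =
  fixes s t :: "nat list" and n r q k p :: nat
  assumes ascent_s: "ascent_seq s" and length_s: "length s = n"
    and Prm_r: "Prm s r = p" and r_less: "r < rmin s"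
    and q_less_k: "q < k" and k_less_p: "k < p"
    and dup: "s ! q = s ! p"
    and between_gt: "\<And>i. q < i \<Longrightarrow> i < p \<Longrightarrow> s ! p < s ! i"
    and between_ge: "\<And>i. q < i \<Longrightarrow> i < p \<Longrightarrow> s ! k \<le> s ! i"
    and after: "\<And>i. p < i \<Longrightarrow> i < n \<Longrightarrow> s ! k < s ! i"
    and t_def: "t = s[p := s ! k]"
begin

lemma p_in_rmin_set: "p \<in> rmin_set s"
  using Prm_in_rmin_set[OF r_less] Prm_r by simp

lemma p_less: "p < n"
  using Prm_less_length[OF r_less] Prm_r length_s by simp

lemma length_t: "length t = n"
  using length_s t_def by simp

lemma t_nth: "i \<noteq> p \<Longrightarrow> t ! i = s ! i"
  using t_def by simp

lemma t_p: "t ! p = s ! k"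
  using t_def p_less length_s by simp

lemma p_less_k: "s ! p < s ! k"
  using between_gt q_less_k k_less_p by simp

lemma q_less_p: "q < p"
  using q_less_k k_less_p by simp

lemma rmin_set_t_from_p: "p \<le> i \<Longrightarrow> i \<in> rmin_set t \<longleftrightarrow> i \<in> rmin_set s"
proof -
  assume "p \<le> i"
  then have "t ! i < t ! j \<longleftrightarrow> s ! i < s ! j" if "i < j" "j < n" for j
    using that t_nth t_p after[of j] p_in_rmin_set rmin_setD[of p s j] length_s
    by (cases "i = p") auto
  then show ?thesis
    by (auto simp: mem_rmin_set_iff length_s length_t)
qed

lemma not_in_rmin_set_between: "q < i \<Longrightarrow> i < p \<Longrightarrow> i \<notin> rmin_set s \<and> i \<notin> rmin_set t"
  using rmin_setD[of i s p] rmin_setD[of i t p] between_gt[of i] between_ge[of i]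
    p_less length_s length_t t_nth t_p by fastforce

lemma q_in_rmin_set_t: "q \<in> rmin_set t"
proof -
  have "s ! p < t ! j" if "q < j" "j < n" for j
    using that between_gt[of j] p_less_k after[of j] t_nth t_p
    by (cases "j < p"; cases "j = p") (auto intro: less_trans)
  then show ?thesis
    using dup t_nth q_less_p p_less by (auto simp: mem_rmin_set_iff length_t)
qed

lemma rmin_set_t_below_q: "i < q \<Longrightarrow> i \<in> rmin_set t \<longleftrightarrow> i \<in> rmin_set s"
proof
  assume i: "i < q" "i \<in> rmin_set s"
  have "t ! i < t ! j" if "i < j" "j < n" for j
    using rmin_setD[OF i(2), of j] rmin_setD[OF i(2), of p] that i q_less_p p_less p_less_k
      t_nth t_p length_s
    by (cases "j = p") auto
  then show "i \<in> rmin_set t"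
    using i q_less_p p_less by (auto simp: mem_rmin_set_iff length_t)
next
  assume i: "i < q" "i \<in> rmin_set t"
  have "s ! i < s ! j" if "i < j" "j < n" for j
    using rmin_setD[OF i(2), of j] rmin_setD[OF i(2), of q] that i q_less_p p_less dup
      t_nth length_t
    by (cases "j = p") auto
  then show "i \<in> rmin_set s"
    using i q_less_p p_less by (auto simp: mem_rmin_set_iff length_s)
qed

lemma rmin_set_t: "rmin_set t = insert q (rmin_set s)"
proof (rule set_eqI)
  fix i
  consider "p \<le> i" | "q < i \<and> i < p" | "i = q" | "i < q"
    by linarith
  then show "i \<in> rmin_set t \<longleftrightarrow> i \<in> insert q (rmin_set s)"
    using rmin_set_t_from_p not_in_rmin_set_between q_in_rmin_set_t rmin_set_t_below_q
      q_less_p by cases auto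
qed

lemma Prm_less_q: "j < r \<Longrightarrow> Prm s j < q"
proof -
  assume j: "j < r"
  then have Pj: "Prm s j \<in> rmin_set s" "Prm s j < p"
    using Prm_in_rmin_set Prm_less_Prm_iff[of j s r] r_less Prm_r by auto
  have "\<not> (q \<le> Prm s j)"
  proof
    assume "q \<le> Prm s j"
    then have "s ! p \<le> s ! Prm s j"
      using dup between_gt[of "Prm s j"] Pj(2) by (cases "q = Prm s j") auto
    then show False
      using rmin_setD[OF Pj(1) Pj(2)] p_less length_s by simp
  qed
  then show ?thesis by simp
qed

lemma rmin_positions_t:
  "rmin_positions t = take r (rmin_positions s) @ q # drop r (rmin_positions s)"
proof -
  have "q < Prm s j" if "r \<le> j" "j < rmin s" for j
    using that q_less_p Prm_r Prm_less_Prm_iff[of r s j] r_less by (cases "r = j") auto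
  then show ?thesis
    unfolding rmin_positions_eq rmin_set_t
    using r_less Prm_less_q
    by (intro sorted_list_of_set_insert_take_drop) (auto simp: rmin_eq_card Prm_eq_nth rmin_positions_eq)
qed

lemma rmin_t: "rmin t = Suc (rmin s)"
  using r_less unfolding rmin_def rmin_positions_t by simp

lemma Prm_t_r: "Prm t r = q"
  using r_less unfolding Prm_eq_nth rmin_positions_t by (simp add: nth_append rmin_def)

lemma Prm_t_Suc: "r \<le> j \<Longrightarrow> Prm t (Suc j) = Prm s j"
  using r_less unfolding Prm_eq_nth rmin_positions_t by (simp add: nth_append rmin_def Suc_diff_le)

lemma rmin_t_less: "rmin t < n"
proof -
  have "k \<notin> rmin_set t"
    using rmin_setD[of k t p] k_less_p p_less length_t t_nth t_p by fastforce
  then show ?thesis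
    using rmin_less_length[of k t] k_less_p p_less length_t by simp
qed

lemma rpos_cond_s: "rpos_cond s r"
proof -
  have "r = 0 \<or> Prm s (r - 1) < q"
    using Prm_less_q[of "r - 1"] by (cases r) auto
  then show ?thesis
    unfolding rpos_cond_def Rmin_def Prm_r
    using q_less_p p_less length_s dup
    by (intro two_le_card_if_distinct[of _ q p]) auto
qed

lemma rpos_cond_t: "rpos_cond t (Suc r)"
  unfolding rpos_cond_def Rmin_def Prm_t_Suc[OF order_refl] Prm_r
  using Prm_t_r q_less_k k_less_p p_less length_t t_nth t_p
  by (intro two_le_card_if_distinct[of _ k p]) auto

lemma rpos_cond_t_Suc_iff:
  assumes i: "r < i" "i < rmin s"
  shows "rpos_cond t (Suc i) \<longleftrightarrow> rpos_cond s i"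
proof -
  have Prm_t: "Prm t (Suc i - 1) = Prm s (i - 1)" "Prm t (Suc i) = Prm s i"
    using Prm_t_Suc[of "i - 1"] Prm_t_Suc[of i] i by auto
  have "p \<le> Prm s (i - 1)" "p < Prm s i"
    using Prm_mono[of r "i - 1" s] Prm_less_Prm_iff[of r s i] Prm_r r_less i by auto
  then have "t ! j = s ! j" if "Prm s (i - 1) < j" for j
    using that t_nth by simp
  moreover have "t ! Prm s i = s ! Prm s i"
    using \<open>p < Prm s i\<close> t_nth by simp
  ultimately show ?thesis
    unfolding rpos_cond_def Rmin_def Prm_t using i length_s length_t
    by (intro arg_cong[where f = "\<lambda>A. 2 \<le> card A"] Collect_cong) auto
qed

lemma rmin_s_less: "rmin s < n"
  using rmin_t rmin_t_less by simp

lemma r_le_rpos: "r \<le> rpos s"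
  using le_rpos[OF _ r_less rpos_cond_s] rmin_s_less length_s by simp

lemma rpos_t: "rpos t = Suc (rpos s)"
proof (rule rpos_eqI)
  have rpos_s: "rpos s < rmin s" "rpos_cond s (rpos s)"
    using rpos_cond_rpos[OF _ r_less rpos_cond_s] rmin_s_less length_s by auto
  show "rmin t \<noteq> length t"
    using rmin_t_less length_t by simp
  show "Suc (rpos s) < rmin t"
    using rpos_s rmin_t by simp
  show "rpos_cond t (Suc (rpos s))"
    using rpos_cond_t rpos_cond_t_Suc_iff[of "rpos s"] rpos_s r_le_rpos
    by (cases "r = rpos s") auto
  fix m assume m: "Suc (rpos s) < m" "m < rmin t"
  then obtain i where i: "m = Suc i" "rpos s < i" "i < rmin s"
    using rmin_t by (cases m) auto
  then have "\<not> rpos_cond s i"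
    using le_rpos[of s i] rmin_s_less length_s by fastforce
  then show "\<not> rpos_cond t m"
    using rpos_cond_t_Suc_iff[of i] i r_le_rpos by simp
qed

lemma Prm_t_rpos: "Prm t (rpos t) = Prm s (rpos s)"
  using rpos_t Prm_t_Suc r_le_rpos by simp

lemma same_ascents_t: "same_ascents s t"
  unfolding t_def
proof (rule same_ascents_update)
  have "q < p - 1" "p - 1 < p"
    using q_less_k k_less_p by auto
  then show "s ! (p - 1) < s ! p \<longleftrightarrow> s ! (p - 1) < s ! k"
    using between_gt[of "p - 1"] between_ge[of "p - 1"] by simp
  show "s ! p < s ! Suc p \<longleftrightarrow> s ! k < s ! Suc p" if "Suc p < length s"
    using that after[of "Suc p"] p_less_k length_s by simp
qed

lemma asc_t: "asc t = asc s"
  using asc_same_ascents[OF same_ascents_t] by simp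

lemma ascent_t: "ascent_seq t"
  using ascent_seq_update[OF ascent_s k_less_p] same_ascents_t t_def by simp

lemma set_t: "set t = set s"
proof
  show "set t \<subseteq> set s"
    unfolding t_def using k_less_p p_less length_s by (intro set_update_subsetI) auto
  show "set s \<subseteq> set t"
  proof
    fix x assume "x \<in> set s"
    then obtain i where i: "i < n" "s ! i = x"
      using length_s by (auto simp: in_set_conv_nth)
    show "x \<in> set t"
    proof (cases "i = p")
      case True
      then have "x = t ! q" using i dup t_nth q_less_p by simp
      then show ?thesis using q_less_p p_less length_t by simp
    next
      case False
      then show ?thesis using i t_nth length_t by (metis nth_mem)
    qed
  qed
qed

lemma rep_t: "rep t = rep s"
  unfolding rep_def using set_t length_s length_t by simp

lemma maxst_t: "maxst t = maxst s"
proof -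
  have "s ! p \<noteq> p"
    using dup nth_le_index[OF ascent_s, of q] q_less_p p_less length_s by simp
  moreover have "t ! p \<noteq> p"
    using t_p nth_le_index[OF ascent_s, of k] k_less_p p_less length_s by simp
  ultimately have "{i. i < length t \<and> t ! i = i} = {i. i < length s \<and> s ! i = i}"
    using t_nth length_s length_t by metis
  then show ?thesis unfolding maxst_def by simp
qed

lemma p_eq_0_iff: "s ! p = 0 \<longleftrightarrow> r = 0"
proof
  show "s ! p = 0" if "r = 0"
    using Rmin_le_nth[of 0 s 0] that r_less p_less length_s ascent_s Prm_r
    unfolding Rmin_def ascent_seq_def by simp
  show "r = 0" if "s ! p = 0"
    using Rmin_less[of "r - 1" r s] r_less that Prm_r unfolding Rmin_def by (cases r) auto
qed

lemma zero_s: "zero s = zero t + of_bool (r = 0)"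
proof -
  let ?Z = "\<lambda>u. {i. i < length u \<and> u ! i = 0}"
  have "t ! p \<noteq> 0"
    using t_p p_less_k by simp
  then have "i \<in> ?Z t \<longleftrightarrow> i \<in> ?Z s - {p}" for i
    using t_nth length_s length_t by (cases "i = p") auto
  then have Z_t: "?Z t = ?Z s - {p}"
    by blast
  show ?thesis
  proof (cases "r = 0")
    case True
    then have "p \<in> ?Z s"
      using p_eq_0_iff p_less length_s by simp
    then have "card (?Z s) = Suc (card (?Z s - {p}))"
      by (intro card.remove) auto
    then show ?thesis
      unfolding zero_def using True Z_t by simp
  next
    case False
    then show ?thesis
      unfolding zero_def using Z_t p_eq_0_iff by simp
  qed
qed

lemma ealm_s: "int (ealm s) = int (ealm t) - of_bool (p = maxst s)"
proof (cases "p = maxst s")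
  case True
  then have fixed: "i < p \<Longrightarrow> s ! i = i" for i
    using nth_eq_index_below_maxst[OF ascent_s] by simp
  have "s ! k \<le> Suc q"
    using between_ge[of "Suc q"] fixed[of "Suc q"] q_less_k k_less_p by simp
  moreover have "q < s ! k"
    using p_less_k dup fixed[of q] q_less_p by simp
  ultimately have "ealm t = Suc q"
    using True p_less length_t t_p maxst_t unfolding ealm_def by simp
  moreover have "ealm s = q"
    using True p_less length_s dup fixed[of q] q_less_p unfolding ealm_def by simp
  ultimately show ?thesis using True by simp
next
  case False
  then have "ealm t = ealm s"
    using maxst_t t_nth length_s length_t unfolding ealm_def by simp
  then show ?thesis using False by simp
qed

lemma last_Masc_iff: "last_Masc s \<longleftrightarrow> t ! (n - 2) < t ! (n - 1) \<and> t ! (n - 1) = asc t"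
proof -
  define a where "a = n - 2"
  define b where "b = n - 1"
  have ab: "Suc a = b" "b < n" "2 \<le> n"
    using q_less_k k_less_p p_less unfolding a_def b_def by auto
  have "s \<noteq> []" using ab length_s by auto
  then have last_Masc_s: "last_Masc s \<longleftrightarrow> s ! b = asc (take b s) + 1"
    unfolding last_Masc_def b_def using length_s by (simp add: last_conv_nth butlast_conv_take)
  have Masc_ascent: "s ! a < s ! b" if "s ! b = asc (take b s) + 1"
    using nth_le_asc_take[OF ascent_s, of a] that ab length_s by simp
  have same: "t ! a < t ! b \<longleftrightarrow> s ! a < s ! b"
    using same_ascents_t ab length_s unfolding same_ascents_def by auto
  have asc_t_eq: "asc t = asc (take b s) + (if t ! a < t ! b then 1 else 0)"
    using asc_butlast[of t] asc_take_same_ascents[OF same_ascents_t, of b] ab length_t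
    unfolding a_def b_def by (simp add: butlast_conv_take)
  show ?thesis
  proof (cases "p = b")
    case True
    then have "q < a" "a < p"
      using ab q_less_k k_less_p by auto
    then have "\<not> s ! a < s ! b" and "\<not> t ! a < t ! b"
      using between_ge[of a] p_less_k t_nth t_p True by auto
    then show ?thesis
      using last_Masc_s Masc_ascent unfolding a_def b_def by blast
  next
    case False
    then have "t ! b = s ! b" using t_nth by simp
    then show ?thesis
      using last_Masc_s Masc_ascent same asc_t_eq unfolding a_def b_def by auto
  qed
qed

lemma s_in_Astar: "s \<in> Astar"
  using ascent_seq_in_Astar[OF ascent_s q_less_p _ dup] p_less length_s by simp

lemma t_in_Astar: "t \<in> Astar"
  using ascent_seq_in_Astar[OF ascent_t k_less_p] t_nth t_p k_less_p p_less length_t by simp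

end

section \<open>The bijection\<close>

definition f4 :: "nat list \<Rightarrow> nat list" where
  "f4 s = s[Prm s (rpos s) := sebr s]"

definition f4_inv :: "nat list \<Rightarrow> nat list" where
  "f4_inv t = t[Prm t (rpos t) := Rmin t (rpos t - 1)]"

locale raise_rpos_entry = raise_entry +
  assumes rpos_s: "rpos s = r"
begin

lemma sebr_s: "sebr s = s ! k"
proof -
  define Occ where "Occ = {j. j < length s \<and> s ! j = s ! p}"
  have Rmin_rpos: "Rmin s (rpos s) = s ! p"
    unfolding Rmin_def rpos_s Prm_r ..
  have q_Occ: "q \<in> Occ" and p_Occ: "p \<in> Occ" and fin: "finite Occ"
    unfolding Occ_def using dup q_less_p p_less length_s by auto
  have not_Occ: "j \<notin> Occ" if "q < j" "j \<noteq> p" for j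
  proof
    assume "j \<in> Occ"
    then have "j < n" "s ! j = s ! p"
      unfolding Occ_def using length_s by auto
    then show False
      using that between_gt[of j] after[of j] p_less_k by (cases "j < p") auto
  qed
  have "Max Occ = p"
  proof (rule Max_eqI[OF fin _ p_Occ])
    show "y \<le> p" if "y \<in> Occ" for y
      using that not_Occ[of y] q_less_p by (cases "q < y") auto
  qed
  moreover have "Max (Occ - {p}) = q"
  proof (rule Max_eqI)
    show "y \<le> q" if "y \<in> Occ - {p}" for y
      using that not_Occ[of y] by (cases "q < y") auto
  qed (use fin q_Occ q_less_p in auto)
  moreover have "Min {s ! i |i. q < i \<and> i < p} = s ! k"
    using q_less_k k_less_p between_ge by (intro Min_eqI) auto
  moreover have "2 \<le> card Occ"
    using two_le_card_if_distinct[OF fin q_Occ p_Occ] q_less_p by simp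
  ultimately show ?thesis
    unfolding sebr_def Let_def Rmin_rpos Occ_def[symmetric] using q_less_k k_less_p by simp
qed

lemma sebr_lt_s: "sebr_lt s"
proof -
  have "s ! k < Rmin s (r + 1)" if "r + 1 < rmin s"
    using that after[of "Prm s (r + 1)"] Prm_less_Prm_iff[of r s "r + 1"] Prm_r r_less
      Prm_less_length[of "r + 1" s] length_s unfolding Rmin_def by simp
  then show ?thesis
    unfolding sebr_lt_def rpos_s sebr_s using r_less by linarith
qed

lemma f4_s: "f4 s = t"
  unfolding f4_def rpos_s Prm_r sebr_s t_def ..

lemma f4_inv_t: "f4_inv t = s"
proof -
  have "Prm t (rpos t) = p" and "Rmin t (rpos t - 1) = s ! p"
    using Prm_t_rpos rpos_t Prm_t_r t_nth q_less_p dup unfolding rpos_s Prm_r Rmin_def by auto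
  then show ?thesis
    unfolding f4_inv_def t_def by simp
qed

lemma in_T4_iff: "s \<in> T4 \<inter> Aset n \<longleftrightarrow> t \<in> {u \<in> Aset n \<inter> P1c. rpos u \<noteq> 0}"
proof -
  have "s \<in> T4 \<inter> Aset n \<longleftrightarrow> \<not> last_Masc s"
    using s_in_Astar ascent_s length_s rmin_t_less rmin_t sebr_s p_less_k sebr_lt_s
    unfolding T4_def Aset_def by auto
  moreover have "t \<in> {u \<in> Aset n \<inter> P1c. rpos u \<noteq> 0} \<longleftrightarrow> \<not> last_Masc s"
    using t_in_Astar ascent_t length_t rpos_t last_Masc_iff
    unfolding P1c_def P1_def Aset_def by auto
  ultimately show ?thesis by simp
qed

lemma f4_correspondence:
  "f4 s = t \<and> f4_inv t = s \<and> (s \<in> T4 \<inter> Aset n \<longleftrightarrow> t \<in> {u \<in> Aset n \<inter> P1c. rpos u \<noteq> 0})"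
  using f4_s f4_inv_t in_T4_iff by blast

lemma f4_statistics:
  "asc s = asc (f4 s) \<and> rep s = rep (f4 s) \<and> maxst s = maxst (f4 s) \<and>
   int (rmin s) = int (rmin (f4 s)) - 1 \<and> int (rpos s) = int (rpos (f4 s)) - 1 \<and>
   zero s = zero (f4 s) + of_bool (rpos s = 0) \<and>
   int (ealm s) = int (ealm (f4 s)) - of_bool (Prm s (rpos s) = maxst s)"
  using f4_s asc_t rep_t maxst_t rmin_t rpos_t zero_s ealm_s Prm_r rpos_s by simp

end

lemma ex_raise_rpos_entry_of_T4:
  assumes "s \<in> T4 \<inter> Aset n"
  shows "\<exists>q k p. raise_rpos_entry s (s[p := s ! k]) n (rpos s) q k p"
proof -
  have ascent_s: "ascent_seq s" and length_s: "length s = n"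
    and sebr_ne_0: "sebr s \<noteq> 0" and "sebr_lt s"
    using assms unfolding T4_def Aset_def by auto
  then have s_ne: "s \<noteq> []" unfolding ascent_seq_def by simp
  define p where "p = Prm s (rpos s)"
  obtain q where r: "rpos s < rmin s" and q: "q < p" "s ! q = s ! p"
    and between_gt: "\<And>i. q < i \<Longrightarrow> i < p \<Longrightarrow> s ! p < s ! i"
    and gap: "Suc q < p" and sebr_Min: "sebr s = Min {s ! i |i. q < i \<and> i < p}"
    using sebr_rightmost_occurrences[OF s_ne sebr_ne_0] unfolding p_def by blast
  obtain k where k: "q < k" "k < p" "s ! k = sebr s"
    and between_ge: "\<And>i. q < i \<Longrightarrow> i < p \<Longrightarrow> s ! k \<le> s ! i"
    using Min_between_attained[OF gap, of "(!) s"] unfolding sebr_Min by blast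
  have after: "s ! k < s ! i" if "p < i" "i < n" for i
    using sebr_less_after_rpos[OF s_ne \<open>sebr_lt s\<close> r] that k(3) length_s p_def by simp
  have "raise_rpos_entry s (s[p := s ! k]) n (rpos s) q k p"
    using ascent_s length_s r q k between_gt between_ge after
    by unfold_locales (auto simp: p_def)
  then show ?thesis by blast
qed

lemma ex_raise_entry_lower:
  assumes ascent_t: "ascent_seq t" and length_t: "length t = n"
    and q_rmin: "q \<in> rmin_set t" and p_rmin: "p \<in> rmin_set t"
    and k: "q < k" "k < p" "t ! k = t ! p"
    and ge_p: "\<And>i. q < i \<Longrightarrow> i < n \<Longrightarrow> t ! p \<le> t ! i"
  shows "\<exists>r. raise_entry (t[p := t ! q]) t n r q k p"
proof -
  define s where "s = t[p := t ! q]"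
  have p_less: "p < n"
    using p_rmin rmin_set_subset length_t by auto
  then have s_nth: "i \<noteq> p \<Longrightarrow> s ! i = t ! i" and s_p: "s ! p = t ! q"
    and length_s: "length s = n" for i
    unfolding s_def using length_t by auto
  have "same_ascents t s"
    unfolding s_def
  proof (rule same_ascents_update)
    have "q < p - 1" "p - 1 < n"
      using k p_less by auto
    then show "t ! (p - 1) < t ! p \<longleftrightarrow> t ! (p - 1) < t ! q"
      using ge_p[of "p - 1"] rmin_setD[OF q_rmin, of p] k p_less length_t by simp
    show "t ! p < t ! Suc p \<longleftrightarrow> t ! q < t ! Suc p" if "Suc p < length t"
      using that rmin_setD[OF p_rmin, of "Suc p"] rmin_setD[OF q_rmin, of "Suc p"] k by simp
  qed
  then have ascent_s: "ascent_seq s"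
    using ascent_seq_update[OF ascent_t, of q p] k unfolding s_def by simp
  have "s ! p < s ! j" if "p < j" "j < n" for j
    using that s_nth s_p rmin_setD[OF q_rmin, of p] rmin_setD[OF p_rmin, of j] k length_t
    by simp
  then have "p \<in> rmin_set s"
    using p_less length_s by (simp add: mem_rmin_set_iff)
  then obtain r where r: "r < rmin s" "Prm s r = p"
    using rmin_set_iff_Prm by blast
  have "s ! p < s ! i" "s ! k \<le> s ! i" if "q < i" "i < p" for i
    using that s_nth s_p k ge_p[of i] rmin_setD[OF q_rmin, of i] p_less length_t by auto
  moreover have "s ! k < s ! i" if "p < i" "i < n" for i
    using that s_nth k rmin_setD[OF p_rmin, of i] length_t by auto
  moreover have "t = s[p := s ! k]" and "s ! q = s ! p"
    using k s_nth s_p unfolding s_def by simp_all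
  ultimately have "raise_entry s t n r q k p"
    using ascent_s length_s r k by unfold_locales auto
  then show ?thesis
    unfolding s_def by blast
qed

lemma ex_raise_rpos_entry_of_target:
  assumes "t \<in> {u \<in> Aset n \<inter> P1c. rpos u \<noteq> 0}"
  shows "\<exists>s r q k p. raise_rpos_entry s t n r q k p"
proof -
  have ascent_t: "ascent_seq t" and length_t: "length t = n" and "rpos t \<noteq> 0"
    using assms unfolding Aset_def P1c_def by auto
  then obtain r' where rpos_t_eq: "rpos t = Suc r'"
    using not0_implies_Suc by blast
  define q where "q = Prm t r'"
  define p where "p = Prm t (Suc r')"
  have r': "Suc r' < rmin t" and "rpos_cond t (Suc r')"
    using rpos_cond_rpos_if_ne_0[of t] rpos_t_eq by auto
  then obtain k where k: "q < k" "k < p" "t ! k = t ! p"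
    using rpos_cond_other_occurrence[of "Suc r'" t] unfolding q_def p_def by auto
  have "q \<in> rmin_set t" "p \<in> rmin_set t"
    using Prm_in_rmin_set[of _ t] r' unfolding q_def p_def by auto
  moreover have "t ! p \<le> t ! i" if "q < i" "i < n" for i
    using Rmin_le_nth[OF r', of i] that length_t unfolding Rmin_def q_def p_def by simp
  ultimately obtain r where entry: "raise_entry (t[p := t ! q]) t n r q k p"
    using ex_raise_entry_lower[OF ascent_t length_t _ _ k] by blast
  then interpret raise_entry "t[p := t ! q]" t n r q k p .
  have "Suc r = Suc r'"
    using Prm_inject[of "Suc r" t "Suc r'"] Prm_t_Suc[of r] Prm_r r_less r' rmin_t
    unfolding p_def by simp
  then have "raise_rpos_entry (t[p := t ! q]) t n r q k p"
    using entry rpos_t rpos_t_eq by (simp add: raise_rpos_entry_def raise_rpos_entry_axioms_def)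
  then show ?thesis by blast
qed

theorem mainTheorem12:
  fixes n :: nat
  shows "\<exists>f. bij_betw f (T4 \<inter> Aset n) {s \<in> Aset n \<inter> P1c. rpos s \<noteq> 0} \<and>
    (\<forall>s \<in> T4 \<inter> Aset n.
       asc s = asc (f s) \<and> rep s = rep (f s) \<and> maxst s = maxst (f s) \<and>
       int (rmin s) = int (rmin (f s)) - 1 \<and>
       int (rpos s) = int (rpos (f s)) - 1 \<and>
       zero s = zero (f s) + of_bool (rpos s = 0) \<and>
       int (ealm s) = int (ealm (f s)) - of_bool (Prm s (rpos s) = maxst s))"
proof -
  let ?X = "T4 \<inter> Aset n" and ?Y = "{s \<in> Aset n \<inter> P1c. rpos s \<noteq> 0}"
  have "f4 s \<in> ?Y \<and> f4_inv (f4 s) = s" if "s \<in> ?X" for s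
    using ex_raise_rpos_entry_of_T4[OF that] that by (auto dest: raise_rpos_entry.f4_correspondence)
  moreover have "f4_inv t \<in> ?X \<and> f4 (f4_inv t) = t" if "t \<in> ?Y" for t
    using ex_raise_rpos_entry_of_target[OF that] that
    by (auto dest: raise_rpos_entry.f4_correspondence)
  ultimately have "bij_betw f4 ?X ?Y"
    by (intro bij_betw_byWitness[where f' = f4_inv]) auto
  then show ?thesis
    using ex_raise_rpos_entry_of_T4 raise_rpos_entry.f4_statistics by blast
qed

end
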